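(* Let $\mathcal{H}(T^2)=\hat{\mathcal{O}}_{\mathbb{Q}}$ be the $\mathbb{C}_q$-module of (possibly infinite) formal sums $\sum_{n,m\in\mathbb{Q}}c_{n,m}Y^nX^m$ with $c_{n,m}\in\mathbb{C}_q$. For $\gamma=\begin{pmatrix} a & b\\ c & d\end{pmatrix}\in SL(2,\mathbb{Z})$ let $\rho(\gamma)$ be the $\mathbb{C}_q$-linear map on $\mathcal{H}(T^2)$ defined termwise on basis elements by $$\rho(\gamma)(Y^nX^m)=q^{-abm^2-2bcmn-cdn^2}\,Y^{bm+dn}X^{am+cn}\qquad(m,n\in\mathbb{Q}).$$ Then this representation of $SL(2,\mathbb{Z})$ on $\mathcal{H}(T^2)$ is faithful: if $\rho(\gamma)=\rho(\gamma')$ then $\gamma=\gamma'$.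
   Context: $\mathbb{C}_q$ denotes the algebraic closure of the field $\mathbb{C}((q))$ of formal Laurent series in $q$. The symbols $Y^nX^m$ ($m,n\in\mathbb{Q}$) are formal basis elements (ordered monomials in the quantum torus with $X^\lambda Y^\mu=q^{-2\lambda\mu}Y^\mu X^\lambda$), and elements of $\hat{\mathcal{O}}_{\mathbb{Q}}$ are arbitrary formal $\mathbb{C}_q$-linear combinations of them, with infinitely many nonzero coefficients allowed; $\rho(\gamma)$ acts coefficientwise on such sums. *)

theory Defs
  imports "HOL-Computational_Algebra.Formal_Laurent_Series" "HOL-Algebra.Algebraic_Closure_Type"
begin

type_synonym Cq = "complex fls alg_closure"

definition qC :: Cq where "qC = to_ac fls_X"

definition qpow :: "rat \<Rightarrow> Cq" where
  "qpow = (SOME f. f 1 = qC \<and> (\<forall>r s. f (r + s) = f r * f s) \<and> (\<forall>r. f r \<noteq> 0))"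

text \<open>Elements of O_Q-hat: arbitrary formal sums  sum c(n,m) Y^n X^m, recorded by their
  coefficient function (n,m) \<mapsto> c(n,m); infinitely many nonzero coefficients allowed.\<close>
type_synonym OQ = "rat \<times> rat \<Rightarrow> Cq"

text \<open>SL(2,Z), a matrix (a b; c d) stored as the tuple (a,b,c,d).\<close>
definition SL2Z :: "(int \<times> int \<times> int \<times> int) set" where
  "SL2Z = {(a, b, c, d). a * d - b * c = 1}"

text \<open>rho(gamma) acting coefficientwise: Y^n X^m is sent to
  q^(-abm^2-2bcmn-cdn^2) Y^(bm+dn) X^(am+cn); the coefficient of Y^n' X^m' of the image
  collects the contributions of all (n,m) mapped to (n',m') (exactly one for gamma in SL2Z).\<close>
definition rho :: "int \<times> int \<times> int \<times> int \<Rightarrow> OQ \<Rightarrow> OQ" where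
  "rho \<gamma> f = (case \<gamma> of (a, b, c, d) \<Rightarrow>
     (\<lambda>(n', m'). \<Sum>(n, m) \<in> {(n, m). of_int b * m + of_int d * n = n' \<and> of_int a * m + of_int c * n = m'}.
        qpow (- (of_int a * of_int b * m^2 + 2 * of_int b * of_int c * m * n + of_int c * of_int d * n^2))
          * f (n, m)))"

end

theory Submission
  imports Defs
begin

(* rho(gamma) sends Y^n X^m to a nonzero multiple of the single monomial Y^(bm+dn) X^(am+cn):
   the exponent map is injective since det gamma = 1, and the coefficient is a rational power
   of q. Comparing the images of X and Y recovers (b, a) and (d, c). Since qpow is a choice,
   its values are nonzero only once some homomorphism (Q,+) -> C_q^* with 1 |-> q is exhibited;
   one is built from a compatible tower of k!-th roots of q in the algebraically closed field. *)

primrec root_tower :: "'a::alg_closed_field \<Rightarrow> nat \<Rightarrow> 'a" where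
  "root_tower x 0 = x"
| "root_tower x (Suc k) = (SOME y. y ^ Suc k = root_tower x k)"

declare root_tower.simps(2) [simp del]

lemma root_tower_Suc_power: "root_tower x (Suc k) ^ Suc k = root_tower x k"
  unfolding root_tower.simps(2) by (rule someI_ex) (rule nth_root_exists, simp)

lemma root_tower_nonzero: "x \<noteq> 0 \<Longrightarrow> root_tower x k \<noteq> 0"
  by (induction k) (simp, metis power_0_Suc root_tower_Suc_power)

lemma root_tower_power_fact:
  assumes "k \<le> K"
  shows "root_tower x K ^ (fact K div fact k) = root_tower x k"
  using assms
proof (induction K rule: dec_induct)
  case base
  show ?case by simp
next
  case (step K)
  have "fact (Suc K) div fact k = Suc K * (fact K div fact k)"
    using fact_dvd[OF step.hyps(1)] by (metis div_mult_swap fact_Suc of_nat_id)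
  then have "root_tower x (Suc K) ^ (fact (Suc K) div fact k)
      = (root_tower x (Suc K) ^ Suc K) ^ (fact K div fact k)"
    by (simp only: power_mult)
  then show ?case
    by (simp only: root_tower_Suc_power step.IH)
qed

lemma root_tower_powi_fact:
  "k \<le> K \<Longrightarrow> root_tower x K powi (int (fact K div fact k) * z) = root_tower x k powi z"
  by (simp flip: power_int_power add: root_tower_power_fact)

definition rat_denom :: "rat \<Rightarrow> nat" where
  "rat_denom r = nat (snd (quotient_of r))"

lemma rat_times_fact_Ints:
  assumes "rat_denom r \<le> K"
  shows "r * fact K \<in> \<int>"
proof -
  obtain p q where pq: "quotient_of r = (p, q)" by fastforce
  have "q > 0" using quotient_of_denom_pos[OF pq] .
  then have "nat q dvd fact K"
    using assms by (intro dvd_fact) (auto simp: rat_denom_def pq)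
  then obtain t where "fact K = nat q * t" by (auto elim: dvdE)
  then have "(fact K :: rat) = of_int q * of_nat t"
    using \<open>q > 0\<close> by (metis of_nat_fact of_nat_mult of_int_of_nat_eq int_nat_eq less_le_not_le)
  then have "r * fact K = of_int (p * int t)"
    using \<open>q > 0\<close> by (simp add: quotient_of_div[OF pq])
  then show ?thesis by simp
qed

definition rat_power :: "'a::alg_closed_field \<Rightarrow> rat \<Rightarrow> 'a" where
  "rat_power x r = root_tower x (rat_denom r) powi \<lfloor>r * fact (rat_denom r)\<rfloor>"

lemma rat_power_eq_root_tower:
  assumes "rat_denom r \<le> K"
  shows "rat_power x r = root_tower x K powi \<lfloor>r * fact K\<rfloor>"
proof -
  define k where "k = rat_denom r"
  obtain z where z: "r * fact k = of_int z"
    using rat_times_fact_Ints[of r k] by (auto simp: k_def elim: Ints_cases)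
  have "fact k dvd (fact K :: nat)"
    using assms by (simp add: k_def fact_dvd)
  then have "fact k * (fact K div fact k) = (fact K :: nat)"
    by simp
  then have "(fact K :: rat) = fact k * of_nat (fact K div fact k)"
    by (metis of_nat_fact of_nat_mult)
  then have rK: "r * fact K = of_int (int (fact K div fact k) * z)"
    by (simp add: z flip: mult.assoc)
  have "rat_power x r = root_tower x k powi z"
    by (simp add: rat_power_def z flip: k_def)
  also have "\<dots> = root_tower x K powi (int (fact K div fact k) * z)"
    using assms unfolding k_def by (rule root_tower_powi_fact [symmetric])
  also have "\<dots> = root_tower x K powi \<lfloor>r * fact K\<rfloor>"
    by (simp only: rK floor_of_int)
  finally show ?thesis .
qed

lemma rat_power_1: "rat_power x 1 = x"
  using rat_power_eq_root_tower[of 1 1 x] root_tower_Suc_power[of x 0] by (simp add: rat_denom_def)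

lemma rat_power_add:
  assumes "x \<noteq> 0"
  shows "rat_power x (r + s) = rat_power x r * rat_power x s"
proof -
  define K where "K = max (rat_denom (r + s)) (max (rat_denom r) (rat_denom s))"
  have "r * fact K \<in> \<int>" "s * fact K \<in> \<int>"
    by (auto intro!: rat_times_fact_Ints simp: K_def)
  then obtain z w where z: "r * fact K = of_int z" and w: "s * fact K = of_int w"
    by (auto elim!: Ints_cases)
  have "(r + s) * fact K = of_int (z + w)"
    using z w by (simp add: distrib_right)
  then show ?thesis
    using rat_power_eq_root_tower[of _ K x] z w
    by (simp add: K_def power_int_add root_tower_nonzero[OF assms])
qed

lemma rat_power_nonzero: "x \<noteq> 0 \<Longrightarrow> rat_power x r \<noteq> 0"
  by (simp add: rat_power_def root_tower_nonzero)

lemma qpow_nonzero: "qpow r \<noteq> 0"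
proof -
  have "qC \<noteq> 0" by (simp add: qC_def)
  then have "\<exists>f :: rat \<Rightarrow> Cq. f 1 = qC \<and> (\<forall>r s. f (r + s) = f r * f s) \<and> (\<forall>r. f r \<noteq> 0)"
    by (intro exI[of _ "rat_power qC"]) (simp add: rat_power_1 \<open>qC \<noteq> 0\<close> rat_power_add rat_power_nonzero)
  then show ?thesis
    unfolding qpow_def by (rule someI2_ex) blast
qed

definition YX :: "rat \<Rightarrow> rat \<Rightarrow> OQ" where
  "YX n m = (\<lambda>p. if p = (n, m) then 1 else 0)"

lemma linear_map_2x2_inj:
  fixes a b c d m n m' n' :: "'a::field"
  assumes det: "a * d - b * c \<noteq> 0"
    and Y: "b * m + d * n = b * m' + d * n'"
    and X: "a * m + c * n = a * m' + c * n'"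
  shows "m = m' \<and> n = n'"
proof -
  have "(a * d - b * c) * (n - n') = a * (b * m + d * n - (b * m' + d * n'))
      - b * (a * m + c * n - (a * m' + c * n'))"
    by (simp add: algebra_simps)
  moreover have "(a * d - b * c) * (m - m') = d * (a * m + c * n - (a * m' + c * n'))
      - c * (b * m + d * n - (b * m' + d * n'))"
    by (simp add: algebra_simps)
  ultimately show ?thesis
    using det X Y by simp
qed

lemma rho_YX:
  assumes "(a, b, c, d) \<in> SL2Z"
  shows "rho (a, b, c, d) (YX n m) p =
    qpow (- (of_int a * of_int b * m^2 + 2 * of_int b * of_int c * m * n + of_int c * of_int d * n^2))
    * YX (of_int b * m + of_int d * n) (of_int a * m + of_int c * n) p"
proof (cases p)
  case (Pair n' m')
  let ?S = "{(n0, m0). of_int b * m0 + of_int d * n0 = n' \<and> of_int a * m0 + of_int c * n0 = m'}"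
  have "a * d - b * c = 1"
    using assms by (simp add: SL2Z_def)
  then have det: "of_int a * of_int d - of_int b * of_int c \<noteq> (0 :: rat)"
    by (metis of_int_1 of_int_diff of_int_mult one_neq_zero)
  show ?thesis
  proof (cases "(n', m') = (of_int b * m + of_int d * n, of_int a * m + of_int c * n)")
    case True
    have "n0 = n \<and> m0 = m" if "(n0, m0) \<in> ?S" for n0 m0
      using linear_map_2x2_inj[OF det, of m0 n0 m n] that True by auto
    then have "?S = {(n, m)}"
      using True by auto
    then show ?thesis
      using True Pair by (simp add: rho_def YX_def)
  next
    case False
    then have "(n, m) \<notin> ?S" by auto
    then show ?thesis
      using False Pair by (auto simp: rho_def YX_def intro!: sum.neutral)
  qed
qed

lemma rho_YX_determines_image:
  assumes "(a, b, c, d) \<in> SL2Z" and "(a', b', c', d') \<in> SL2Z"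
    and "rho (a, b, c, d) (YX n m) = rho (a', b', c', d') (YX n m)"
  shows "of_int b * m + of_int d * n = of_int b' * m + of_int d' * n
    \<and> of_int a * m + of_int c * n = of_int a' * m + of_int c' * n"
proof -
  let ?p = "(of_int b * m + of_int d * n, of_int a * m + of_int c * n)"
  have "rho (a', b', c', d') (YX n m) ?p \<noteq> 0"
    unfolding assms(3) [symmetric] rho_YX[OF assms(1)] by (simp add: YX_def qpow_nonzero)
  then show ?thesis
    unfolding rho_YX[OF assms(2)] by (auto simp: YX_def split: if_splits)
qed

theorem mainTheorem2:
  assumes "\<gamma> \<in> SL2Z" and "\<gamma>' \<in> SL2Z" and "rho \<gamma> = rho \<gamma>'"
  shows "\<gamma> = \<gamma>'"
proof -
  obtain a b c d a' b' c' d' where \<gamma>: "\<gamma> = (a, b, c, d)" and \<gamma>': "\<gamma>' = (a', b', c', d')"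
    by (metis prod_cases4)
  have X: "(of_int b :: rat) = of_int b' \<and> (of_int a :: rat) = of_int a'"
    using rho_YX_determines_image[of a b c d a' b' c' d' 0 1] assms by (simp add: \<gamma> \<gamma>')
  have Y: "(of_int d :: rat) = of_int d' \<and> (of_int c :: rat) = of_int c'"
    using rho_YX_determines_image[of a b c d a' b' c' d' 1 0] assms by (simp add: \<gamma> \<gamma>')
  show ?thesis
    using X Y by (simp add: \<gamma> \<gamma>')
qed

end
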